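(* Let $t_1$ and $t_2$ be terms. If the output of the typed unification algorithm applied to $t_1$ and $t_2$ is $\mathit{wrong}$, then there is no substitution $\theta$ such that $\theta(t_1)$ and $\theta(t_2)$ have the same type.
   Context: Terms are built from variables and function symbols: a variable is a term, and if $f$ is an $n$-ary function symbol and $t_1,\dots,t_n$ are terms then $f(t_1,\dots,t_n)$ is a term; a $0$-ary function symbol is a constant. Types: base types int, float, atom, string; compound types $f(\sigma_1,\dots,\sigma_n)$. Every constant has an associated base type, and every function symbol $f$ of arity $n\ge 1$ has type $\sigma_1\times\cdots\times\sigma_n\to f(\sigma_1,\dots,\sigma_n)$, so a ground term $f(t_1,\dots,t_n)$ with $t_i$ of type $\sigma_i$ has type $f(\sigma_1,\dots,\sigma_n)$. A substitution maps variables to terms; $\theta(t)$ denotes its application to $t$. Typed unification algorithm: given terms $t_1,t_2$, start from the pair $(S,F)=(\{t_1=t_2\},\mathit{true})$, where $F$ is a flag, and rewrite it with the following rules until none applies or the algorithm halts with $\mathit{wrong}$ ($c,d$ denote constants, $X$ a variable, $\mathit{Rest}$ the remaining equations): 1. $(\{f(t_1,\dots,t_n)=f(s_1,\dots,s_n)\}\cup \mathit{Rest},F)\to(\{t_1=s_1,\dots,t_n=s_n\}\cup\mathit{Rest},F)$; 2. $(\{f(t_1,\dots,t_n)=g(s_1,\dots,s_m)\}\cup\mathit{Rest},F)\to \mathit{wrong}$ if $f\neq g$ or $n\neq m$; 3. $(\{c=c\}\cup\mathit{Rest},F)\to(\mathit{Rest},F)$; 4. $(\{c=d\}\cup\mathit{Rest},F)\to(\mathit{Rest},\mathit{false})$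 if $c\neq d$ and $c,d$ have the same type; 5. $(\{c=d\}\cup\mathit{Rest},F)\to\mathit{wrong}$ if $c\neq d$ and $c,d$ have different types; 6. $(\{c=f(t_1,\dots,t_n)\}\cup\mathit{Rest},F)\to\mathit{wrong}$; 7. $(\{f(t_1,\dots,t_n)=c\}\cup\mathit{Rest},F)\to\mathit{wrong}$; 8. $(\{X=X\}\cup\mathit{Rest},F)\to(\mathit{Rest},F)$; 9. $(\{t=X\}\cup\mathit{Rest},F)\to(\{X=t\}\cup\mathit{Rest},F)$ if $t$ is not a variable; 10. $(\{X=t\}\cup\mathit{Rest},F)\to(\{X=t\}\cup[X\mapsto t](\mathit{Rest}),F)$ if $X$ does not occur in $t$ and $X$ occurs in $\mathit{Rest}$; 11. $(\{X=t\}\cup\mathit{Rest},F)\to(\mathit{Rest},\mathit{false})$ if $X$ occurs in $t$ and $X\neq t$. When no rule applies, the algorithm outputs $\mathit{false}$ if the flag is $\mathit{false}$, and otherwise outputs the current solved set $S$. *)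

theory Defs
  imports Main
begin

text \<open>First-order terms over function symbols 'f and variables 'v.
  A constant is a 0-ary application Fun c [].\<close>
datatype ('f, 'v) trm = Var 'v | Fun 'f "('f, 'v) trm list"

datatype basety = IntT | FloatT | AtomT | StringT

datatype 'f ty = Base basety | Comp 'f "'f ty list"

fun vars :: "('f, 'v) trm \<Rightarrow> 'v set" where
  "vars (Var x) = {x}"
| "vars (Fun f ts) = \<Union> (set (map vars ts))"

fun subst :: "('v \<Rightarrow> ('f, 'v) trm) \<Rightarrow> ('f, 'v) trm \<Rightarrow> ('f, 'v) trm" where
  "subst \<theta> (Var x) = \<theta> x"
| "subst \<theta> (Fun f ts) = Fun f (map (subst \<theta>) ts)"

text \<open>Typing of ground terms; ctype gives the base type of each constant.
  Variables have no type.\<close>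
inductive has_type :: "('f \<Rightarrow> basety) \<Rightarrow> ('f, 'v) trm \<Rightarrow> 'f ty \<Rightarrow> bool"
  for ctype :: "'f \<Rightarrow> basety" where
  const: "has_type ctype (Fun c []) (Base (ctype c))"
| comp: "ts \<noteq> [] \<Longrightarrow> list_all2 (has_type ctype) ts \<sigma>s
         \<Longrightarrow> has_type ctype (Fun f ts) (Comp f \<sigma>s)"

type_synonym ('f, 'v) eqn = "('f, 'v) trm \<times> ('f, 'v) trm"
type_synonym ('f, 'v) state = "('f, 'v) eqn set \<times> bool"

datatype ('f, 'v) result = Cont "('f, 'v) state" | Wrong

definition subst_eqn :: "('v \<Rightarrow> ('f, 'v) trm) \<Rightarrow> ('f, 'v) eqn \<Rightarrow> ('f, 'v) eqn" where
  "subst_eqn \<theta> e = (subst \<theta> (fst e), subst \<theta> (snd e))"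

definition eqs_vars :: "('f, 'v) eqn set \<Rightarrow> 'v set" where
  "eqs_vars R = (\<Union>e\<in>R. vars (fst e) \<union> vars (snd e))"

definition is_var :: "('f, 'v) trm \<Rightarrow> bool" where
  "is_var t = (\<exists>x. t = Var x)"

text \<open>In each rule the selected equation e is split off: S = insert e Rest with e \<notin> Rest.\<close>
inductive ustep :: "('f \<Rightarrow> basety) \<Rightarrow> ('f, 'v) state \<Rightarrow> ('f, 'v) result \<Rightarrow> bool"
  for ctype :: "'f \<Rightarrow> basety" where
  r1: "\<lbrakk>ts \<noteq> []; length ts = length ss; (Fun f ts, Fun f ss) \<notin> Rest\<rbrakk> \<Longrightarrow>
       ustep ctype (insert (Fun f ts, Fun f ss) Rest, F) (Cont (set (zip ts ss) \<union> Rest, F))"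
| r2: "\<lbrakk>ts \<noteq> []; ss \<noteq> []; f \<noteq> g \<or> length ts \<noteq> length ss; (Fun f ts, Fun g ss) \<notin> Rest\<rbrakk> \<Longrightarrow>
       ustep ctype (insert (Fun f ts, Fun g ss) Rest, F) Wrong"
| r3: "(Fun c [], Fun c []) \<notin> Rest \<Longrightarrow>
       ustep ctype (insert (Fun c [], Fun c []) Rest, F) (Cont (Rest, F))"
| r4: "\<lbrakk>c \<noteq> d; ctype c = ctype d; (Fun c [], Fun d []) \<notin> Rest\<rbrakk> \<Longrightarrow>
       ustep ctype (insert (Fun c [], Fun d []) Rest, F) (Cont (Rest, False))"
| r5: "\<lbrakk>c \<noteq> d; ctype c \<noteq> ctype d; (Fun c [], Fun d []) \<notin> Rest\<rbrakk> \<Longrightarrow>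
       ustep ctype (insert (Fun c [], Fun d []) Rest, F) Wrong"
| r6: "\<lbrakk>ts \<noteq> []; (Fun c [], Fun f ts) \<notin> Rest\<rbrakk> \<Longrightarrow>
       ustep ctype (insert (Fun c [], Fun f ts) Rest, F) Wrong"
| r7: "\<lbrakk>ts \<noteq> []; (Fun f ts, Fun c []) \<notin> Rest\<rbrakk> \<Longrightarrow>
       ustep ctype (insert (Fun f ts, Fun c []) Rest, F) Wrong"
| r8: "(Var X, Var X) \<notin> Rest \<Longrightarrow>
       ustep ctype (insert (Var X, Var X) Rest, F) (Cont (Rest, F))"
| r9: "\<lbrakk>\<not> is_var t; (t, Var X) \<notin> Rest\<rbrakk> \<Longrightarrow>
       ustep ctype (insert (t, Var X) Rest, F) (Cont (insert (Var X, t) Rest, F))"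
| r10: "\<lbrakk>X \<notin> vars t; X \<in> eqs_vars Rest; (Var X, t) \<notin> Rest\<rbrakk> \<Longrightarrow>
       ustep ctype (insert (Var X, t) Rest, F)
         (Cont (insert (Var X, t) (subst_eqn (Var(X := t)) ` Rest), F))"
| r11: "\<lbrakk>X \<in> vars t; Var X \<noteq> t; (Var X, t) \<notin> Rest\<rbrakk> \<Longrightarrow>
       ustep ctype (insert (Var X, t) Rest, F) (Cont (Rest, False))"

text \<open>The algorithm, started on (S, F) = ({t1 = t2}, true), halts with wrong
  (along some run of the nondeterministic rewriting).\<close>
definition outputs_wrong :: "('f \<Rightarrow> basety) \<Rightarrow> ('f, 'v) trm \<Rightarrow> ('f, 'v) trm \<Rightarrow> bool" where
  "outputs_wrong ctype t1 t2 =
     (\<exists>s. (\<lambda>a b. ustep ctype a (Cont b))\<^sup>*\<^sup>* ({(t1, t2)}, True) s \<and> ustep ctype s Wrong)"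

end

theory Submission
  imports Defs
begin

text \<open>Fix a substitution \<theta> that makes t1 and t2 typable with a common type. Then every
  equation reached by the algorithm is still solved by \<theta> in this typed sense; for rule 10
  this holds because \<theta> X and \<theta> t have the same type, so replacing X by t does not change
  the type of any instance. But every rule that halts with wrong is applied to an equation
  whose two sides can never get a common type under any substitution (distinct head
  symbols or arities, constants of different base types, a constant against a compound
  term). Hence wrong cannot be reached.\<close>

lemma has_type_Fun_Nil_iff: "has_type ct (Fun c []) \<sigma> \<longleftrightarrow> \<sigma> = Base (ct c)"
  by (auto simp: has_type.simps)

lemma has_type_Fun_iff:
  "ts \<noteq> [] \<Longrightarrow>
   has_type ct (Fun f ts) \<sigma> \<longleftrightarrow> (\<exists>\<sigma>s. \<sigma> = Comp f \<sigma>s \<and> list_all2 (has_type ct) ts \<sigma>s)"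
  by (subst has_type.simps) auto

lemma has_type_unique: "has_type ct t \<sigma> \<Longrightarrow> has_type ct t \<tau> \<Longrightarrow> \<sigma> = \<tau>"
proof (induction t \<sigma> arbitrary: \<tau> rule: has_type.induct)
  case (const c)
  then show ?case by (simp add: has_type_Fun_Nil_iff)
next
  case (comp ts \<sigma>s f)
  then obtain \<tau>s where \<tau>: "\<tau> = Comp f \<tau>s" "list_all2 (has_type ct) ts \<tau>s"
    by (auto simp: has_type_Fun_iff)
  have "\<sigma>s = \<tau>s"
    using comp.IH \<tau>(2) by (auto simp: list_all2_conv_all_nth intro: nth_equalityI)
  with \<tau>(1) show ?case by simp
qed

lemma subst_subst: "subst \<theta> (subst \<rho> t) = subst (\<lambda>x. subst \<theta> (\<rho> x)) t"
  by (induction t) auto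

lemma has_type_subst_cong:
  assumes "\<And>x \<sigma>. x \<in> vars t \<Longrightarrow> has_type ct (\<theta>1 x) \<sigma> \<longleftrightarrow> has_type ct (\<theta>2 x) \<sigma>"
  shows "has_type ct (subst \<theta>1 t) \<sigma> \<longleftrightarrow> has_type ct (subst \<theta>2 t) \<sigma>"
  using assms
proof (induction t arbitrary: \<sigma>)
  case (Var x)
  then show ?case by simp
next
  case (Fun f ts)
  have "has_type ct (subst \<theta>1 u) \<sigma> \<longleftrightarrow> has_type ct (subst \<theta>2 u) \<sigma>" if "u \<in> set ts" for u \<sigma>
    by (rule Fun.IH[OF that]) (use Fun.prems that in auto)
  then have "list_all2 (has_type ct) (map (subst \<theta>1) ts) \<sigma>s \<longleftrightarrow>
             list_all2 (has_type ct) (map (subst \<theta>2) ts) \<sigma>s" for \<sigma>s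
    by (simp add: list_all2_map1 cong: list.rel_cong)
  then show ?case
    by (cases "ts = []") (simp_all add: has_type_Fun_iff)
qed

definition typed_unifier ::
  "('f \<Rightarrow> basety) \<Rightarrow> ('v \<Rightarrow> ('f, 'v) trm) \<Rightarrow> ('f, 'v) eqn set \<Rightarrow> bool" where
  "typed_unifier ct \<theta> S \<longleftrightarrow>
     (\<forall>(l, r)\<in>S. \<exists>\<sigma>. has_type ct (subst \<theta> l) \<sigma> \<and> has_type ct (subst \<theta> r) \<sigma>)"

lemma typed_unifier_insert_iff:
  "typed_unifier ct \<theta> (insert (l, r) S) \<longleftrightarrow>
   (\<exists>\<sigma>. has_type ct (subst \<theta> l) \<sigma> \<and> has_type ct (subst \<theta> r) \<sigma>) \<and> typed_unifier ct \<theta> S"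
  by (simp add: typed_unifier_def)

lemma typed_unifier_decompose:
  assumes "ts \<noteq> []" "length ts = length ss"
    and "has_type ct (subst \<theta> (Fun f ts)) \<sigma>" "has_type ct (subst \<theta> (Fun f ss)) \<sigma>"
  shows "typed_unifier ct \<theta> (set (zip ts ss))"
proof -
  have "ss \<noteq> []"
    using assms(1,2) by auto
  with assms obtain \<sigma>s where
    "list_all2 (has_type ct) (map (subst \<theta>) ts) \<sigma>s"
    "list_all2 (has_type ct) (map (subst \<theta>) ss) \<sigma>s"
    by (auto simp: has_type_Fun_iff)
  then show ?thesis
    by (auto simp: typed_unifier_def list_all2_conv_all_nth set_zip) blast
qed

lemma typed_unifier_eliminate:
  assumes "has_type ct (\<theta> X) \<tau>" "has_type ct (subst \<theta> t) \<tau>"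
    and "typed_unifier ct \<theta> S"
  shows "typed_unifier ct \<theta> (subst_eqn (Var(X := t)) ` S)"
proof -
  have same_types: "has_type ct (subst \<theta> ((Var(X := t)) x)) \<sigma> \<longleftrightarrow> has_type ct (\<theta> x) \<sigma>"
    for x \<sigma>
  proof (cases "x = X")
    case True
    have "has_type ct (subst \<theta> t) \<sigma> \<longleftrightarrow> has_type ct (\<theta> X) \<sigma>"
      using assms(1,2) has_type_unique by blast
    with True show ?thesis by simp
  qed simp
  have "has_type ct (subst \<theta> (subst (Var(X := t)) u)) \<sigma> \<longleftrightarrow> has_type ct (subst \<theta> u) \<sigma>"
    for u \<sigma>
    unfolding subst_subst by (rule has_type_subst_cong) (rule same_types)
  with assms(3) show ?thesis
    by (auto simp: typed_unifier_def subst_eqn_def)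
qed

lemma ustep_Wrong_not_typed_unifier:
  assumes "ustep ct s Wrong"
  shows "\<not> typed_unifier ct \<theta> (fst s)"
  using assms
proof cases
  case (r2 ts ss f g Rest F)
  then show ?thesis
    by (auto simp: typed_unifier_insert_iff has_type_Fun_iff)
      (metis length_map list_all2_lengthD)
qed (auto simp: typed_unifier_insert_iff has_type_Fun_iff has_type_Fun_Nil_iff)

lemma ustep_Cont_typed_unifier:
  assumes "ustep ct s (Cont s')" "typed_unifier ct \<theta> (fst s)"
  shows "typed_unifier ct \<theta> (fst s')"
  using assms
proof cases
  case (r1 ts ss f Rest F)
  with assms(2) obtain \<sigma> where
    "has_type ct (subst \<theta> (Fun f ts)) \<sigma>" "has_type ct (subst \<theta> (Fun f ss)) \<sigma>"
    and rest: "typed_unifier ct \<theta> Rest"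
    by (auto simp: typed_unifier_insert_iff)
  with r1 have "typed_unifier ct \<theta> (set (zip ts ss))"
    by (auto intro: typed_unifier_decompose)
  with rest r1 show ?thesis
    by (auto simp: typed_unifier_def)
next
  case (r10 X t Rest F)
  with assms(2) obtain \<tau> where
    "has_type ct (\<theta> X) \<tau>" "has_type ct (subst \<theta> t) \<tau>" and "typed_unifier ct \<theta> Rest"
    by (auto simp: typed_unifier_insert_iff)
  with r10 show ?thesis
    by (auto simp: typed_unifier_insert_iff intro: typed_unifier_eliminate)
qed (use assms(2) in \<open>auto simp: typed_unifier_insert_iff\<close>)

lemma ustep_Cont_rtranclp_typed_unifier:
  assumes "(\<lambda>a b. ustep ct a (Cont b))\<^sup>*\<^sup>* s s'" "typed_unifier ct \<theta> (fst s)"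
  shows "typed_unifier ct \<theta> (fst s')"
  using assms by induction (auto intro: ustep_Cont_typed_unifier)

theorem theorem2:
  fixes ctype :: "'f \<Rightarrow> basety" and t1 t2 :: "('f, 'v) trm"
  assumes "outputs_wrong ctype t1 t2"
  shows "\<not> (\<exists>\<theta> \<sigma>. has_type ctype (subst \<theta> t1) \<sigma> \<and> has_type ctype (subst \<theta> t2) \<sigma>)"
proof
  assume "\<exists>\<theta> \<sigma>. has_type ctype (subst \<theta> t1) \<sigma> \<and> has_type ctype (subst \<theta> t2) \<sigma>"
  then obtain \<theta> where start: "typed_unifier ctype \<theta> {(t1, t2)}"
    by (auto simp: typed_unifier_def)
  from assms obtain s where
    reach: "(\<lambda>a b. ustep ctype a (Cont b))\<^sup>*\<^sup>* ({(t1, t2)}, True) s"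
    and wrong: "ustep ctype s Wrong"
    by (auto simp: outputs_wrong_def)
  have "typed_unifier ctype \<theta> (fst s)"
    using ustep_Cont_rtranclp_typed_unifier[OF reach] start by simp
  with wrong show False
    using ustep_Wrong_not_typed_unifier by blast
qed

end
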